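(* In the $T$-period model described in the context, with short sales prohibitions (admissible strategies are predictable self-financing with $h_m(t)\ge 0$ for $m\ge 1$), if there is no multi-period arbitrage under model uncertainty, then there exists a weak risk neutral nonlinear expectation: a nonempty family $\mathcal{Q}$ of probability measures on $\Omega$ with $\sup_{Q\in\mathcal{Q}}Q(\omega)>0$ for all $\omega\in\Omega$ such that for all $0\le t\le u\le T$, all $m=1,\dots,M$ and all $\omega\in\Omega$, $$\inf_{Q\in\mathcal{Q},\,Q(\omega)>0}E_Q[S_m^*(u)\mid\mathcal{F}_t](\omega)\le S_m^*(t)(\omega).$$
   Context: Multi-period model: $\Omega=\{\omega_1,\dots,\omega_K\}$ is finite with a filtration $\mathcal{F}_0\subseteq\cdots\subseteq\mathcal{F}_T$, $\mathcal{F}_0$ trivial and $\mathcal{F}_T=2^\Omega$. $\mathcal{P}$ is a nonempty family of probability measures on $\Omega$ with $\sup_{P\in\mathcal{P}}P(\omega)>0$ for all $\omega$. Bond: $S_0(0)=1$, $S_0(t)=(1+r_1)\cdots(1+r_t)$, each $r_t\ge 0$ $\mathcal{F}_{t-1}$-measurable. Risky securities $S_m(t)$ are $\mathcal{F}_t$-measurable with $S_m(0)>0$. Discounted prices $S_m^*(t)=S_m(t)/S_0(t)$, $\Delta S_m^*(t)=S_m^*(t)-S_m^*(t-1)$. A trading strategy $H=(h(t))_{t=1}^T$, $h(t)=(h_0(t),\dots,h_M(t))$ $\mathcal{F}_{t-1}$-measurable; $V^*(0)=h_0(1)+\sum_m h_m(1)S_m^*(0)$, $V^*(t)=h_0(t)+\sum_m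 h_m(t)S_m^*(t)$. $H$ is self-financing if $[h_0(t+1)-h_0(t)]+\sum_m[h_m(t+1)-h_m(t)]S_m^*(t)=0$ for $t=1,\dots,T-1$. An admissible self-financing $H$ is a multi-period arbitrage under model uncertainty if $V^*(0)=0$, $V^*(T)\ge 0$ on $\Omega$, and $\sup_{P\in\mathcal{P}}E_P[V^*(T)]>0$. For $Q$ with $Q(\omega)>0$, $E_Q[X\mid\mathcal{F}_t](\omega)$ is the $Q$-average of $X$ over the $\mathcal{F}_t$-atom containing $\omega$. *)

theory Defs
  imports "HOL-Analysis.Analysis"
begin

text \<open>Finite sample space = the finite type 'w (Omega = UNIV).
  Probability measures on Omega are represented by their mass functions.\<close>

definition prob_fun :: "('w::finite \<Rightarrow> real) \<Rightarrow> bool" where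
  "prob_fun Q \<longleftrightarrow> (\<forall>w. 0 \<le> Q w) \<and> (\<Sum>w\<in>UNIV. Q w) = 1"

definition expect :: "('w::finite \<Rightarrow> real) \<Rightarrow> ('w \<Rightarrow> real) \<Rightarrow> real" where
  "expect Q X = (\<Sum>w\<in>UNIV. Q w * X w)"

definition is_filtration :: "nat \<Rightarrow> (nat \<Rightarrow> 'w::finite set set) \<Rightarrow> bool" where
  "is_filtration T F \<longleftrightarrow>
     (\<forall>t\<le>T. algebra UNIV (F t)) \<and>
     (\<forall>s t. s \<le> t \<longrightarrow> t \<le> T \<longrightarrow> F s \<subseteq> F t) \<and>
     F 0 = {{}, UNIV} \<and> F T = Pow UNIV"

definition meas_wrt :: "'w set set \<Rightarrow> ('w \<Rightarrow> real) \<Rightarrow> bool" where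
  "meas_wrt A f \<longleftrightarrow> (\<forall>y. f -` {y} \<in> A)"

definition atom :: "(nat \<Rightarrow> 'w set set) \<Rightarrow> nat \<Rightarrow> 'w \<Rightarrow> 'w set" where
  "atom F t w = \<Inter>{A \<in> F t. w \<in> A}"

definition cond_exp :: "(nat \<Rightarrow> 'w::finite set set) \<Rightarrow> nat \<Rightarrow> ('w \<Rightarrow> real) \<Rightarrow> ('w \<Rightarrow> real) \<Rightarrow> 'w \<Rightarrow> real" where
  "cond_exp F t Q X w = (\<Sum>x\<in>atom F t w. Q x * X x) / (\<Sum>x\<in>atom F t w. Q x)"

text \<open>Bond S_0(t) = (1+r_1)...(1+r_t), discounted prices S*_m(t) = S_m(t)/S_0(t).
  S m t w is the price of risky asset m at time t.\<close>
definition bond :: "(nat \<Rightarrow> 'w \<Rightarrow> real) \<Rightarrow> nat \<Rightarrow> 'w \<Rightarrow> real" where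
  "bond r t w = (\<Prod>s\<in>{1..t}. 1 + r s w)"

definition disc :: "(nat \<Rightarrow> nat \<Rightarrow> 'w \<Rightarrow> real) \<Rightarrow> (nat \<Rightarrow> 'w \<Rightarrow> real) \<Rightarrow> nat \<Rightarrow> nat \<Rightarrow> 'w \<Rightarrow> real" where
  "disc S r m t w = S m t w / bond r t w"

definition model :: "nat \<Rightarrow> nat \<Rightarrow> (nat \<Rightarrow> 'w::finite set set) \<Rightarrow> (nat \<Rightarrow> 'w \<Rightarrow> real)
    \<Rightarrow> (nat \<Rightarrow> nat \<Rightarrow> 'w \<Rightarrow> real) \<Rightarrow> bool" where
  "model T M F r S \<longleftrightarrow>
     is_filtration T F \<and>
     (\<forall>t\<in>{1..T}. \<forall>w. 0 \<le> r t w) \<and>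
     (\<forall>t\<in>{1..T}. meas_wrt (F (t - 1)) (r t)) \<and>
     (\<forall>m\<in>{1..M}. \<forall>t\<le>T. meas_wrt (F t) (S m t)) \<and>
     (\<forall>m\<in>{1..M}. \<forall>w. 0 < S m 0 w)"

text \<open>Trading strategy h t m w = h_m(t)(w), t = 1..T, m = 0..M (m = 0 is the bond).\<close>
definition value0 :: "(nat \<Rightarrow> nat \<Rightarrow> 'w \<Rightarrow> real) \<Rightarrow> (nat \<Rightarrow> 'w \<Rightarrow> real) \<Rightarrow> nat
    \<Rightarrow> (nat \<Rightarrow> nat \<Rightarrow> 'w \<Rightarrow> real) \<Rightarrow> 'w \<Rightarrow> real" where
  "value0 S r M h w = h 1 0 w + (\<Sum>m=1..M. h 1 m w * disc S r m 0 w)"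

definition valuet :: "(nat \<Rightarrow> nat \<Rightarrow> 'w \<Rightarrow> real) \<Rightarrow> (nat \<Rightarrow> 'w \<Rightarrow> real) \<Rightarrow> nat
    \<Rightarrow> (nat \<Rightarrow> nat \<Rightarrow> 'w \<Rightarrow> real) \<Rightarrow> nat \<Rightarrow> 'w \<Rightarrow> real" where
  "valuet S r M h t w = h t 0 w + (\<Sum>m=1..M. h t m w * disc S r m t w)"

definition admissible :: "nat \<Rightarrow> nat \<Rightarrow> (nat \<Rightarrow> 'w set set) \<Rightarrow> (nat \<Rightarrow> 'w \<Rightarrow> real)
    \<Rightarrow> (nat \<Rightarrow> nat \<Rightarrow> 'w \<Rightarrow> real) \<Rightarrow> (nat \<Rightarrow> nat \<Rightarrow> 'w \<Rightarrow> real) \<Rightarrow> bool" where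
  "admissible T M F r S h \<longleftrightarrow>
     (\<forall>t\<in>{1..T}. \<forall>m\<le>M. meas_wrt (F (t - 1)) (h t m)) \<and>
     (\<forall>t\<in>{1..T - 1}. \<forall>w. (h (t + 1) 0 w - h t 0 w)
        + (\<Sum>m=1..M. (h (t + 1) m w - h t m w) * disc S r m t w) = 0) \<and>
     (\<forall>t\<in>{1..T}. \<forall>m\<in>{1..M}. \<forall>w. 0 \<le> h t m w)"

definition arbitrage :: "('w::finite \<Rightarrow> real) set \<Rightarrow> nat \<Rightarrow> nat \<Rightarrow> (nat \<Rightarrow> 'w set set)
    \<Rightarrow> (nat \<Rightarrow> 'w \<Rightarrow> real) \<Rightarrow> (nat \<Rightarrow> nat \<Rightarrow> 'w \<Rightarrow> real) \<Rightarrow> (nat \<Rightarrow> nat \<Rightarrow> 'w \<Rightarrow> real) \<Rightarrow> bool" where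
  "arbitrage \<P> T M F r S h \<longleftrightarrow>
     admissible T M F r S h \<and>
     (\<forall>w. value0 S r M h w = 0) \<and>
     (\<forall>w. 0 \<le> valuet S r M h T w) \<and>
     (SUP P\<in>\<P>. expect P (valuet S r M h T)) > 0"

definition prob_family :: "('w::finite \<Rightarrow> real) set \<Rightarrow> bool" where
  "prob_family \<Q> \<longleftrightarrow> \<Q> \<noteq> {} \<and> (\<forall>Q\<in>\<Q>. prob_fun Q) \<and> (\<forall>w. (SUP Q\<in>\<Q>. Q w) > 0)"

end

theory Submission
  imports Defs
begin

text \<open>Short sales are forbidden, but buying is not: if on the \<open>F\<^sub>t\<close>-atom of \<open>w\<close> the discounted
  price \<open>S\<^sup>*\<^sub>m(u)\<close> exceeded \<open>S\<^sup>*\<^sub>m(t)(w)\<close> everywhere, then buying one share at time \<open>t\<close> on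
  that atom with borrowed money and selling it at \<open>u\<close> would be an arbitrage: it never loses and
  it gains at \<open>w\<close>, which some measure of the family charges. Hence some state \<open>x\<close> of the atom
  has \<open>S\<^sup>*\<^sub>m(u)(x) \<le> S\<^sup>*\<^sub>m(t)(w)\<close>. The family of all probability measures is then weakly
  risk neutral: the mixtures \<open>(1 - \<epsilon>) \<delta>\<^sub>x + \<epsilon> \<delta>\<^sub>w\<close> charge \<open>w\<close>, and their conditional
  expectations of \<open>S\<^sup>*\<^sub>m(u)\<close> at \<open>w\<close> tend to \<open>S\<^sup>*\<^sub>m(u)(x)\<close> as \<open>\<epsilon> \<rightarrow> 0\<close>.\<close>

lemma mem_atom_iff: "y \<in> atom F t x \<longleftrightarrow> (\<forall>B\<in>F t. x \<in> B \<longrightarrow> y \<in> B)"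
  by (auto simp: atom_def)

lemma atom_self [simp]: "x \<in> atom F t x"
  by (simp add: atom_def)

lemma atom_antimono: "F s \<subseteq> F t \<Longrightarrow> atom F t x \<subseteq> atom F s x"
  by (auto simp: atom_def)

lemma meas_wrt_constant_on_atom:
  assumes "meas_wrt (F t) f" and "y \<in> atom F t x"
  shows "f y = f x"
proof -
  have "f -` {f x} \<in> F t"
    using assms(1) by (simp add: meas_wrt_def)
  with assms(2) show ?thesis
    by (auto simp: mem_atom_iff)
qed

lemma atom_sym:
  assumes "algebra UNIV (F t)" and "y \<in> atom F t x"
  shows "x \<in> atom F t y"
  unfolding mem_atom_iff
proof (intro ballI impI)
  fix B assume "B \<in> F t" "y \<in> B"
  then have "- B \<in> F t"
    using algebra.compl_sets[OF assms(1)] by (simp add: Compl_eq_Diff_UNIV)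
  with \<open>y \<in> B\<close> assms(2) show "x \<in> B"
    by (auto simp: mem_atom_iff)
qed

lemma mem_atom_iff_atom_eq:
  assumes "algebra UNIV (F t)"
  shows "x \<in> atom F t w \<longleftrightarrow> atom F t x = atom F t w"
proof
  assume x: "x \<in> atom F t w"
  show "atom F t x = atom F t w"
  proof
    show "atom F t x \<subseteq> atom F t w"
      using x by (auto simp: mem_atom_iff)
    show "atom F t w \<subseteq> atom F t x"
      using atom_sym[of F t, OF assms x] by (auto simp: mem_atom_iff)
  qed
qed (use atom_self in metis)

lemma atom_in_algebra:
  fixes F :: "nat \<Rightarrow> 'w::finite set set"
  assumes "algebra UNIV (F t)"
  shows "atom F t x \<in> F t"
proof -
  interpret algebra UNIV "F t" by (fact assms)
  have "(\<Inter>B\<in>{B \<in> F t. x \<in> B}. B) \<in> F t"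
    using top by (intro finite_INT) auto
  then show ?thesis
    by (simp add: atom_def)
qed

lemma meas_wrt_if_constant_on_atoms:
  fixes F :: "nat \<Rightarrow> 'w::finite set set"
  assumes "algebra UNIV (F t)" and "\<And>x y. y \<in> atom F t x \<Longrightarrow> f y = f x"
  shows "meas_wrt (F t) f"
  unfolding meas_wrt_def
proof
  fix c
  interpret algebra UNIV "F t" by (fact assms(1))
  have "f -` {c} = (\<Union>x\<in>f -` {c}. atom F t x)"
  proof (intro equalityI subsetI)
    fix y assume "y \<in> (\<Union>x\<in>f -` {c}. atom F t x)"
    then obtain x where "f x = c" "y \<in> atom F t x"
      by blast
    then show "y \<in> f -` {c}"
      using assms(2)[of y x] by simp
  qed (use atom_self[of _ F t] in blast)
  also have "\<dots> \<in> F t"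
    using atom_in_algebra[of F t, OF assms(1)] by (intro finite_UN) simp_all
  finally show "f -` {c} \<in> F t" .
qed

lemma is_filtration_algebra: "is_filtration T F \<Longrightarrow> t \<le> T \<Longrightarrow> algebra UNIV (F t)"
  by (simp add: is_filtration_def)

lemma is_filtration_mono: "is_filtration T F \<Longrightarrow> s \<le> t \<Longrightarrow> t \<le> T \<Longrightarrow> F s \<subseteq> F t"
  by (simp add: is_filtration_def)

lemma disc_constant_on_atom:
  assumes "model T M F r S" and "u \<le> T" and "m \<in> {1..M}" and "y \<in> atom F u x"
  shows "disc S r m u y = disc S r m u x"
proof -
  have filt: "is_filtration T F"
    using assms(1) by (simp add: model_def)
  have "meas_wrt (F u) (S m u)"
    using assms(1-3) by (simp add: model_def)
  then have "S m u y = S m u x"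
    using assms(4) by (rule meas_wrt_constant_on_atom)
  moreover have "r s y = r s x" if "s \<in> {1..u}" for s
  proof (rule meas_wrt_constant_on_atom[of F "s - 1"])
    show "meas_wrt (F (s - 1)) (r s)"
      using assms(1,2) that by (simp add: model_def)
    have "F (s - 1) \<subseteq> F u"
      using filt assms(2) that by (intro is_filtration_mono) auto
    then show "y \<in> atom F (s - 1) x"
      using assms(4) atom_antimono[of F "s - 1" u] by blast
  qed
  then have "bond r u y = bond r u x"
    unfolding bond_def by (intro prod.cong) auto
  ultimately show ?thesis
    by (simp add: disc_def)
qed

definition holding_value :: "(nat \<Rightarrow> nat \<Rightarrow> 'w \<Rightarrow> real) \<Rightarrow> (nat \<Rightarrow> 'w \<Rightarrow> real) \<Rightarrow> nat
    \<Rightarrow> (nat \<Rightarrow> nat \<Rightarrow> 'w \<Rightarrow> real) \<Rightarrow> nat \<Rightarrow> nat \<Rightarrow> 'w \<Rightarrow> real" where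
  "holding_value S r M h s t w = h s 0 w + (\<Sum>m=1..M. h s m w * disc S r m t w)"

lemma value0_eq_holding_value: "value0 S r M h = holding_value S r M h 1 0"
  by (simp add: fun_eq_iff value0_def holding_value_def)

lemma valuet_eq_holding_value: "valuet S r M h t = holding_value S r M h t t"
  by (simp add: fun_eq_iff valuet_def holding_value_def)

lemma self_financing_increment_eq:
  "(h (t + 1) 0 w - h t 0 w) + (\<Sum>m=1..M. (h (t + 1) m w - h t m w) * disc S r m t w)
     = holding_value S r M h (t + 1) t w - holding_value S r M h t t w"
  by (simp add: holding_value_def left_diff_distrib sum_subtractf)

text \<open>On the \<open>F\<^sub>t\<close>-atom of \<open>w\<close>: hold one share of asset \<open>m\<close> over the periods \<open>t+1..u\<close>,
  financed by a bond debt of \<open>S\<^sup>*\<^sub>m(t)(w)\<close>; afterwards keep the net proceeds of the sale in the bond.\<close>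

definition buy_and_sell :: "(nat \<Rightarrow> nat \<Rightarrow> 'w \<Rightarrow> real) \<Rightarrow> (nat \<Rightarrow> 'w \<Rightarrow> real) \<Rightarrow> (nat \<Rightarrow> 'w set set)
    \<Rightarrow> nat \<Rightarrow> nat \<Rightarrow> nat \<Rightarrow> 'w \<Rightarrow> nat \<Rightarrow> nat \<Rightarrow> 'w \<Rightarrow> real" where
  "buy_and_sell S r F m t u w s j x =
     (if x \<in> atom F t w \<and> t < s then
        if s \<le> u then (if j = 0 then - disc S r m t w else if j = m then 1 else 0)
        else (if j = 0 then disc S r m u x - disc S r m t w else 0)
      else 0)"

lemma holding_value_buy_and_sell:
  assumes "m \<in> {1..M}"
  shows "holding_value S r M (buy_and_sell S r F m t u w) s b x =
    (if x \<in> atom F t w \<and> t < s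
     then (if s \<le> u then disc S r m b x else disc S r m u x) - disc S r m t w else 0)"
proof -
  have unit_m: "(\<Sum>j=1..M. (if j = 0 then a else if j = m then 1 else 0) * disc S r j b x)
      = disc S r m b x" for a
  proof -
    have "(\<Sum>j=1..M. (if j = 0 then a else if j = m then 1 else 0) * disc S r j b x)
        = (\<Sum>j\<in>{1..M}. if j = m then disc S r j b x else 0)"
      by (intro sum.cong) auto
    then show ?thesis
      using assms by simp
  qed
  show ?thesis
    unfolding holding_value_def buy_and_sell_def using unit_m by auto
qed

lemma buy_and_sell_admissible:
  assumes model: "model T M F r S" and "t < u" "u \<le> T" "m \<in> {1..M}"
  shows "admissible T M F r S (buy_and_sell S r F m t u w)"
  unfolding admissible_def
proof (intro conjI ballI allI impI)
  have filt: "is_filtration T F"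
    using model by (simp add: model_def)
  fix s j assume s: "s \<in> {1..T}" and "j \<le> M"
  show "meas_wrt (F (s - 1)) (buy_and_sell S r F m t u w s j)"
  proof (rule meas_wrt_if_constant_on_atoms[of F "s - 1"])
    show "algebra UNIV (F (s - 1))"
      using filt s by (intro is_filtration_algebra) auto
    fix x y assume y: "y \<in> atom F (s - 1) x"
    show "buy_and_sell S r F m t u w s j y = buy_and_sell S r F m t u w s j x"
    proof (cases "t < s")
      case True
      have "algebra UNIV (F t)"
        using filt True s by (intro is_filtration_algebra) auto
      moreover have "y \<in> atom F t x"
        using y atom_antimono[of F t "s - 1"] is_filtration_mono[OF filt, of t "s - 1"] True s
        by auto
      ultimately have same_atom: "y \<in> atom F t w \<longleftrightarrow> x \<in> atom F t w"
        by (simp add: mem_atom_iff_atom_eq)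
      have "disc S r m u y = disc S r m u x" if "u < s"
      proof (rule disc_constant_on_atom[OF model \<open>u \<le> T\<close> \<open>m \<in> {1..M}\<close>])
        show "y \<in> atom F u x"
          using y atom_antimono[of F u "s - 1"] is_filtration_mono[OF filt, of u "s - 1"] that s
          by auto
      qed
      then show ?thesis
        using same_atom by (simp add: buy_and_sell_def)
    qed (simp add: buy_and_sell_def)
  qed
next
  fix s x assume "s \<in> {1..T - 1}"
  have "disc S r m t x = disc S r m t w" if "x \<in> atom F t w"
    using disc_constant_on_atom[OF model _ \<open>m \<in> {1..M}\<close> that] assms(2,3) by simp
  then show "(buy_and_sell S r F m t u w (s + 1) 0 x - buy_and_sell S r F m t u w s 0 x)
      + (\<Sum>j=1..M. (buy_and_sell S r F m t u w (s + 1) j x - buy_and_sell S r F m t u w s j x)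
          * disc S r j s x) = 0"
    unfolding self_financing_increment_eq holding_value_buy_and_sell[OF \<open>m \<in> {1..M}\<close>]
    using \<open>t < u\<close> by (cases "s < t \<or> s = t \<or> (t < s \<and> s < u) \<or> s = u") auto
next
  fix s j x assume "j \<in> {1..M}"
  then show "0 \<le> buy_and_sell S r F m t u w s j x"
    by (simp add: buy_and_sell_def)
qed

lemma value0_buy_and_sell:
  assumes "model T M F r S" and "t < u" "u \<le> T" "m \<in> {1..M}"
  shows "value0 S r M (buy_and_sell S r F m t u w) x = 0"
  using disc_constant_on_atom[OF assms(1) _ assms(4), of t x w] assms(2,3)
  by (auto simp: value0_eq_holding_value holding_value_buy_and_sell[OF assms(4)])

lemma valuet_buy_and_sell:
  assumes "t < u" "u \<le> T" "m \<in> {1..M}"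
  shows "valuet S r M (buy_and_sell S r F m t u w) T x =
    (if x \<in> atom F t w then disc S r m u x - disc S r m t w else 0)"
  using assms by (simp add: valuet_eq_holding_value holding_value_buy_and_sell[OF assms(3)])

lemma prob_fun_le_one:
  assumes "prob_fun P" shows "P x \<le> 1"
proof -
  have "P x \<le> (\<Sum>y\<in>UNIV. P y)"
    using assms by (intro member_le_sum) (auto simp: prob_fun_def)
  with assms show ?thesis
    by (simp add: prob_fun_def)
qed

lemma prob_family_ex_pos:
  assumes "prob_family \<P>" shows "\<exists>P\<in>\<P>. 0 < P w"
proof (rule ccontr)
  assume "\<not> (\<exists>P\<in>\<P>. 0 < P w)"
  then have "(SUP P\<in>\<P>. P w) \<le> 0"
    using assms by (intro cSUP_least) (auto simp: prob_family_def not_less)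
  with assms show False
    unfolding prob_family_def by (metis not_le)
qed

lemma expect_pos:
  assumes "prob_fun P" and "\<And>x. 0 \<le> V x" and "0 < P w" and "0 < V w"
  shows "0 < expect P V"
proof -
  have "P w * V w \<le> expect P V"
    unfolding expect_def using assms(1,2) by (intro member_le_sum) (auto simp: prob_fun_def)
  moreover have "0 < P w * V w"
    using assms(3,4) by simp
  ultimately show ?thesis
    by linarith
qed

lemma bdd_above_expect:
  assumes "\<And>Q. Q \<in> \<Q> \<Longrightarrow> prob_fun Q"
  shows "bdd_above ((\<lambda>Q. expect Q V) ` \<Q>)"
proof (rule bdd_aboveI2)
  fix Q assume "Q \<in> \<Q>"
  then have Q: "prob_fun Q"
    by (fact assms)
  have "Q y * V y \<le> \<bar>V y\<bar>" for y
  proof -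
    have "Q y * V y \<le> Q y * \<bar>V y\<bar>"
      using Q by (intro mult_left_mono) (auto simp: prob_fun_def)
    also have "\<dots> \<le> \<bar>V y\<bar>"
      using Q prob_fun_le_one[OF Q] by (intro mult_left_le_one_le) (auto simp: prob_fun_def)
    finally show ?thesis .
  qed
  then show "expect Q V \<le> (\<Sum>y\<in>UNIV. \<bar>V y\<bar>)"
    unfolding expect_def by (intro sum_mono)
qed

lemma arbitrageI:
  assumes "prob_family \<P>" and "admissible T M F r S h"
    and "\<And>x. value0 S r M h x = 0" and "\<And>x. 0 \<le> valuet S r M h T x"
    and "0 < valuet S r M h T w"
  shows "arbitrage \<P> T M F r S h"
proof -
  obtain P where "P \<in> \<P>" "0 < P w"
    using prob_family_ex_pos[OF assms(1)] by blast
  have prob: "\<And>Q. Q \<in> \<P> \<Longrightarrow> prob_fun Q"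
    using assms(1) by (simp add: prob_family_def)
  have "0 < expect P (valuet S r M h T)"
    using prob[OF \<open>P \<in> \<P>\<close>] assms(4) \<open>0 < P w\<close> assms(5) by (rule expect_pos)
  also have "\<dots> \<le> (SUP Q\<in>\<P>. expect Q (valuet S r M h T))"
    using \<open>P \<in> \<P>\<close> bdd_above_expect[OF prob] by (rule cSUP_upper)
  finally show ?thesis
    using assms(2-4) by (simp add: arbitrage_def)
qed

lemma no_arbitrage_ex_le_on_atom:
  assumes model: "model T M F r S" and "prob_family \<P>"
    and no_arb: "\<not> (\<exists>h. arbitrage \<P> T M F r S h)"
    and "t \<le> u" "u \<le> T" "m \<in> {1..M}"
  shows "\<exists>x\<in>atom F t w. disc S r m u x \<le> disc S r m t w"
proof (rule ccontr)
  assume "\<not> ?thesis"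
  then have rise: "disc S r m t w < disc S r m u x" if "x \<in> atom F t w" for x
    using that by (simp add: not_le)
  have "t < u"
    using rise[OF atom_self] \<open>t \<le> u\<close> by (cases "t = u") auto
  let ?h = "buy_and_sell S r F m t u w"
  have "arbitrage \<P> T M F r S ?h"
  proof (rule arbitrageI[where w = w])
    show "admissible T M F r S ?h"
      using model \<open>t < u\<close> assms(5,6) by (rule buy_and_sell_admissible)
    show "value0 S r M ?h x = 0" for x
      using model \<open>t < u\<close> assms(5,6) by (rule value0_buy_and_sell)
    show "0 \<le> valuet S r M ?h T x" for x
      using rise[of x] \<open>t < u\<close> assms(5,6) by (simp add: valuet_buy_and_sell less_imp_le)
    show "0 < valuet S r M ?h T w"
      using rise[OF atom_self] \<open>t < u\<close> assms(5,6) by (simp add: valuet_buy_and_sell)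
  qed fact
  with no_arb show False
    by blast
qed

lemma prob_fun_indicator_singleton: "prob_fun (indicator {a})"
  unfolding prob_fun_def by (simp add: indicator_def of_bool_def sum.delta)

lemma prob_fun_mixture:
  assumes "prob_fun P" "prob_fun Q" "0 \<le> e" "e \<le> 1"
  shows "prob_fun (\<lambda>x. (1 - e) * P x + e * Q x)"
  using assms by (simp add: prob_fun_def sum.distrib flip: sum_distrib_left)

lemma sum_point_mass_mixture:
  fixes f :: "'a \<Rightarrow> real"
  assumes "finite A" "x \<in> A" "w \<in> A"
  shows "(\<Sum>y\<in>A. ((1 - e) * indicator {x} y + e * indicator {w} y) * f y) = (1 - e) * f x + e * f w"
proof -
  have "(\<Sum>y\<in>A. ((1 - e) * indicator {x} y + e * indicator {w} y) * f y)
      = (1 - e) * (\<Sum>y\<in>A. indicator {x} y * f y) + e * (\<Sum>y\<in>A. indicator {w} y * f y)"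
    by (simp only: sum.distrib sum_distrib_left ring_distribs mult.assoc)
  moreover have "(\<Sum>y\<in>A. indicator {a} y * f y) = f a" if "a \<in> A" for a
  proof -
    have "(\<Sum>y\<in>A. indicator {a} y * f y) = (\<Sum>y\<in>A. if y = a then f y else 0)"
      by (intro sum.cong) (simp_all add: indicator_def)
    with assms(1) that show ?thesis
      by simp
  qed
  ultimately show ?thesis
    using assms(2,3) by simp
qed

lemma cond_exp_point_mass_mixture:
  assumes "x \<in> atom F t w"
  shows "cond_exp F t (\<lambda>y. (1 - e) * indicator {x} y + e * indicator {w} y) X w
    = (1 - e) * X x + e * X w"
  using sum_point_mass_mixture[OF _ assms atom_self, of e X]
    sum_point_mass_mixture[OF _ assms atom_self, of e "\<lambda>_. 1"]
  by (simp add: cond_exp_def)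

lemma cond_exp_ge:
  assumes "prob_fun Q" and "0 < Q w" and "\<And>y. y \<in> atom F t w \<Longrightarrow> b \<le> X y"
  shows "b \<le> cond_exp F t Q X w"
proof -
  have "0 < (\<Sum>y\<in>atom F t w. Q y)"
    using assms(1,2) by (intro sum_pos2[OF _ atom_self]) (auto simp: prob_fun_def)
  moreover have "(\<Sum>y\<in>atom F t w. Q y) * b \<le> (\<Sum>y\<in>atom F t w. Q y * X y)"
    unfolding sum_distrib_right using assms(1,3)
    by (intro sum_mono mult_left_mono) (auto simp: prob_fun_def)
  ultimately show ?thesis
    by (simp add: cond_exp_def pos_le_divide_eq mult.commute)
qed

lemma INF_cond_exp_le:
  fixes X :: "'w::finite \<Rightarrow> real"
  assumes "x \<in> atom F t w"
  shows "(INF Q\<in>{Q \<in> {Q. prob_fun Q}. 0 < Q w}. cond_exp F t Q X w) \<le> X x"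
proof (rule field_le_epsilon)
  let ?Qs = "{Q \<in> {Q. prob_fun Q}. 0 < Q w}"
  have "bdd_below ((\<lambda>Q. cond_exp F t Q X w) ` ?Qs)"
    by (rule bdd_belowI2[where m = "Min (range X)"]) (auto intro: cond_exp_ge)
  then have mixture_bound: "(INF Q\<in>?Qs. cond_exp F t Q X w) \<le> X x + e * (X w - X x)"
    if "0 < e" "e \<le> 1" for e
  proof (rule cINF_lower2)
    have "prob_fun (\<lambda>y. (1 - e) * indicator {x} y + e * indicator {w} y)"
      using that by (intro prob_fun_mixture prob_fun_indicator_singleton) auto
    moreover have "0 < (1 - e) * indicator {x} w + e * indicator {w} w"
      using that by (simp add: indicator_def)
    ultimately show "(\<lambda>y. (1 - e) * indicator {x} y + e * indicator {w} y) \<in> ?Qs"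
      by simp
  qed (simp only: cond_exp_point_mass_mixture[OF assms], simp add: algebra_simps)
  fix \<epsilon> :: real assume "0 < \<epsilon>"
  define e where "e = min 1 (\<epsilon> / (\<bar>X w - X x\<bar> + 1))"
  have e: "0 < e" "e \<le> 1"
    using \<open>0 < \<epsilon>\<close> by (auto simp: e_def)
  have "e * (X w - X x) \<le> e * \<bar>X w - X x\<bar>"
    using e by (intro mult_left_mono) auto
  also have "\<dots> \<le> \<epsilon> / (\<bar>X w - X x\<bar> + 1) * \<bar>X w - X x\<bar>"
    by (intro mult_right_mono) (auto simp: e_def)
  also have "\<dots> \<le> \<epsilon>"
    using \<open>0 < \<epsilon>\<close> by (simp add: field_simps)
  finally show "(INF Q\<in>?Qs. cond_exp F t Q X w) \<le> X x + \<epsilon>"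
    using mixture_bound[OF e] by linarith
qed

lemma prob_family_all: "prob_family {Q :: 'w::finite \<Rightarrow> real. prob_fun Q}"
  unfolding prob_family_def
proof (intro conjI allI ballI)
  fix w :: 'w
  have "bdd_above ((\<lambda>Q. Q w) ` {Q. prob_fun Q})"
    using prob_fun_le_one by (intro bdd_aboveI2) auto
  then have "indicator {w} w \<le> (SUP Q\<in>{Q. prob_fun Q}. Q w)"
    using prob_fun_indicator_singleton by (intro cSUP_upper) auto
  then show "0 < (SUP Q\<in>{Q. prob_fun Q}. Q w)"
    by simp
qed (use prob_fun_indicator_singleton in auto)

theorem mainTheorem7:
  fixes T M :: nat
    and F :: "nat \<Rightarrow> 'w::finite set set"
    and r :: "nat \<Rightarrow> 'w \<Rightarrow> real"
    and S :: "nat \<Rightarrow> nat \<Rightarrow> 'w \<Rightarrow> real"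
    and \<P> :: "('w \<Rightarrow> real) set"
  assumes "model T M F r S"
    and "prob_family \<P>"
    and "\<not> (\<exists>h. arbitrage \<P> T M F r S h)"
  shows "\<exists>\<Q>. prob_family \<Q> \<and>
    (\<forall>t u m w. t \<le> u \<longrightarrow> u \<le> T \<longrightarrow> m \<in> {1..M} \<longrightarrow>
       (INF Q\<in>{Q\<in>\<Q>. Q w > 0}. cond_exp F t Q (disc S r m u) w) \<le> disc S r m t w)"
proof (intro exI conjI allI impI)
  show "prob_family {Q. prob_fun Q}"
    by (fact prob_family_all)
  fix t u m w assume "t \<le> u" "u \<le> T" "m \<in> {1..M}"
  then obtain x where "x \<in> atom F t w" "disc S r m u x \<le> disc S r m t w"
    using no_arbitrage_ex_le_on_atom[OF assms] by blast
  then show "(INF Q\<in>{Q \<in> {Q. prob_fun Q}. 0 < Q w}. cond_exp F t Q (disc S r m u) w)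
      \<le> disc S r m t w"
    using INF_cond_exp_le[of x F t w "disc S r m u"] by linarith
qed

end
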